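(* With $U_0,\Omega'_0,U'_0,y,\Upsilon_y,Z_y,S_2$ as in the context, let $Z'_y$ be the unique function on $\mathbb{K}^E$ with $dZ'_y=\cos\Upsilon_y\,dU'_0+\sin\Upsilon_y\star dU'_0$ and $Z'_y\to0$ at infinity. Then the one-form $$\mathbf{T}_2=-\frac{4}{\rho}S_2\star d(Z'_y+U'_0)$$ satisfies on $\mathbb{K}^E$ $$d(\rho\star\mathbf{T}_2)=8\sin\Upsilon_y\,e^{-2U_0-2Z_y}\,d\Omega'_0\wedge\star dU'_0,$$ equivalently $\nabla_aT_2^a=\frac{8}{\sqrt{\rho^2+(z-y)^2}}e^{-2U_0-2Z_y}(d\Omega'_0,dU'_0)_\gamma$ off the axis.
   Context: Let $\mathbb{E}^3$ have cylindrical coordinates $(\rho,z,\phi)$ and flat metric $\gamma=d\rho^2+dz^2+\rho^2d\phi^2$, with covariant derivative $\nabla$. Let $\Sigma_0$ be a $C^1$ axially symmetric surface diffeomorphic to a 2-sphere, given by $\{\rho=\rho_0(\mu),z=z_0(\mu),\phi=\varphi\}$, $\mu\in[\mu_S,\mu_N]$, with $\mu_S<\mu_N$ the only zeros of $\rho_0$ and $z_S:=z_0(\mu_S)<z_N:=z_0(\mu_N)$; $D_0$ is its unbounded exterior region. A function $f$ on $D_0$ is regular if it is $C^2$ on $D_0$, has a $C^1$ extension to $D_0\cup\Sigma_0$, and $rf$ is bounded ($r=\sqrt{\rho^2+z^2}$). $\mathbb{K}=\{(\rho,z):\rho\ge0\}$ carries the metric $d\rho^2+dz^2$ and Hodge star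 with $\star d\rho=-dz$, $\star dz=d\rho$; axially symmetric functions and one-forms $T^\rho d\rho+T^zdz$ are identified with objects on $\mathbb{K}$; $\mathbb{K}^E$ is the projection of $D_0$. $U_0$ and $U'_0$ are axially symmetric regular flat-harmonic functions on $D_0$, and $\Omega'_0$ an axially symmetric regular solution of $\triangle_\gamma\Omega'_0-4(d\Omega'_0,dU_0)_\gamma=0$. For $y\in(z_S,z_N)$: $\cos\Upsilon_y=(z-y)/\sqrt{\rho^2+(z-y)^2}$, $\sin\Upsilon_y=\rho/\sqrt{\rho^2+(z-y)^2}$; $Z_y$ is the solution of $dZ_y=\cos\Upsilon_y\,dU_0+\sin\Upsilon_y\star dU_0$ vanishing at infinity; $S_2$ is the solution vanishing at infinity of $dS_2=e^{-2U_0-2Z_y}[(1-\cos\Upsilon_y)d\Omega'_0-\sin\Upsilon_y\star d\Omega'_0]$. *)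

theory Defs
  imports "HOL-Analysis.Analysis"
begin

definition cyl_pt :: "real \<Rightarrow> real \<Rightarrow> real \<Rightarrow> real^3" where
  "cyl_pt r z phi = vector [r * cos phi, r * sin phi, z]"

definition rev_surface :: "(real \<Rightarrow> real) \<Rightarrow> (real \<Rightarrow> real) \<Rightarrow> real \<Rightarrow> real \<Rightarrow> (real^3) set" where
  "rev_surface rho0 z0 muS muN =
     {x. \<exists>mu \<in> {muS..muN}. \<exists>phi. x = cyl_pt (rho0 mu) (z0 mu) phi}"

definition C1_interval :: "(real \<Rightarrow> real) \<Rightarrow> real set \<Rightarrow> bool" where
  "C1_interval f I \<longleftrightarrow> (\<exists>f'. continuous_on I f' \<and>
      (\<forall>t\<in>I. (f has_real_derivative f' t) (at t within I)))"

text \<open>A set is a C^1 embedded surface diffeomorphic to the 2-sphere: the image of the unit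
  sphere under an injective C^1 map whose differential is injective on tangent planes.\<close>
definition C1_sphere_surface :: "(real^3) set \<Rightarrow> bool" where
  "C1_sphere_surface S \<longleftrightarrow>
     (\<exists>h :: real^3 \<Rightarrow> real^3. \<exists>V. \<exists>D. open V \<and> sphere 0 1 \<subseteq> V \<and>
        (\<forall>x\<in>V. (h has_derivative D x) (at x)) \<and>
        (\<forall>v. continuous_on V (\<lambda>x. D x v)) \<and>
        inj_on h (sphere 0 1) \<and> h ` sphere 0 1 = S \<and>
        (\<forall>x\<in>sphere 0 1. \<forall>v. v \<bullet> x = 0 \<and> v \<noteq> 0 \<longrightarrow> D x v \<noteq> 0))"

definition grad3 :: "(real^3 \<Rightarrow> real) \<Rightarrow> real^3 \<Rightarrow> real^3" where
  "grad3 f x = (\<Sum>i\<in>Basis. deriv (\<lambda>t. f (x + t *\<^sub>R i)) 0 *\<^sub>R i)"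

definition lap3 :: "(real^3 \<Rightarrow> real) \<Rightarrow> real^3 \<Rightarrow> real" where
  "lap3 f x = (\<Sum>i\<in>Basis. deriv (deriv (\<lambda>t. f (x + t *\<^sub>R i))) 0)"

definition C1_on :: "(real^3) set \<Rightarrow> (real^3 \<Rightarrow> real) \<Rightarrow> bool" where
  "C1_on S f \<longleftrightarrow> (\<exists>g. continuous_on S g \<and>
      (\<forall>x\<in>S. (f has_derivative (\<lambda>h. g x \<bullet> h)) (at x)))"

definition C2_on :: "(real^3) set \<Rightarrow> (real^3 \<Rightarrow> real) \<Rightarrow> bool" where
  "C2_on S f \<longleftrightarrow> (\<exists>g. (\<forall>x\<in>S. (f has_derivative (\<lambda>h. g x \<bullet> h)) (at x)) \<and>
      (\<forall>i\<in>Basis. C1_on S (\<lambda>x. g x \<bullet> i)))"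

text \<open>Regular function on the exterior region D (with boundary surface S): C^2 on D,
  C^1 extension to D \<union> S (function and gradient extend continuously), and r f bounded.\<close>
definition regular :: "(real^3) set \<Rightarrow> (real^3) set \<Rightarrow> (real^3 \<Rightarrow> real) \<Rightarrow> bool" where
  "regular D S f \<longleftrightarrow> C2_on D f \<and>
     (\<exists>F g. (\<forall>x\<in>D. F x = f x) \<and> continuous_on (D \<union> S) F \<and> continuous_on (D \<union> S) g \<and>
        (\<forall>x\<in>D. (F has_derivative (\<lambda>h. g x \<bullet> h)) (at x))) \<and>
     bounded ((\<lambda>x. norm x * f x) ` D)"

definition lift :: "(real \<times> real \<Rightarrow> real) \<Rightarrow> real^3 \<Rightarrow> real" where
  "lift U x = U (sqrt ((x$1)\<^sup>2 + (x$2)\<^sup>2), x$3)"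

definition proj_K :: "(real^3) set \<Rightarrow> (real \<times> real) set" where
  "proj_K D = {p. fst p \<ge> 0 \<and> cyl_pt (fst p) (snd p) 0 \<in> D}"

definition pd_rho :: "(real \<times> real \<Rightarrow> real) \<Rightarrow> real \<times> real \<Rightarrow> real" where
  "pd_rho f p = deriv (\<lambda>r. f (r, snd p)) (fst p)"

definition pd_z :: "(real \<times> real \<Rightarrow> real) \<Rightarrow> real \<times> real \<Rightarrow> real" where
  "pd_z f p = deriv (\<lambda>s. f (fst p, s)) (snd p)"

text \<open>One-forms T^rho d rho + T^z dz are represented by their component pairs (T^rho, T^z);
  two-forms by their coefficient of d rho \<and> dz.\<close>
definition d0 :: "(real \<times> real \<Rightarrow> real) \<Rightarrow> real \<times> real \<Rightarrow> real \<times> real" where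
  "d0 f p = (pd_rho f p, pd_z f p)"

text \<open>Hodge star: star d rho = - dz, star dz = d rho.\<close>
definition hodge :: "real \<times> real \<Rightarrow> real \<times> real" where
  "hodge w = (snd w, - fst w)"

definition wedge :: "real \<times> real \<Rightarrow> real \<times> real \<Rightarrow> real" where
  "wedge v w = fst v * snd w - snd v * fst w"

definition d1 :: "(real \<times> real \<Rightarrow> real \<times> real) \<Rightarrow> real \<times> real \<Rightarrow> real" where
  "d1 w p = pd_rho (\<lambda>q. snd (w q)) p - pd_z (\<lambda>q. fst (w q)) p"

text \<open>Flat divergence of the axially symmetric vector field T^rho d_rho + T^z d_z on E^3,
  expressed in cylindrical coordinates (valid off the axis).\<close>
definition cyl_div :: "(real \<times> real \<Rightarrow> real \<times> real) \<Rightarrow> real \<times> real \<Rightarrow> real" where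
  "cyl_div T p = pd_rho (\<lambda>q. fst q * fst (T q)) p / fst p + pd_z (\<lambda>q. snd (T q)) p"

definition cosU :: "real \<Rightarrow> real \<times> real \<Rightarrow> real" where
  "cosU y p = (snd p - y) / sqrt ((fst p)\<^sup>2 + (snd p - y)\<^sup>2)"

definition sinU :: "real \<Rightarrow> real \<times> real \<Rightarrow> real" where
  "sinU y p = fst p / sqrt ((fst p)\<^sup>2 + (snd p - y)\<^sup>2)"

definition has_diff_on :: "(real \<times> real \<Rightarrow> real) \<Rightarrow> (real \<times> real \<Rightarrow> real \<times> real) \<Rightarrow> (real \<times> real) set \<Rightarrow> bool" where
  "has_diff_on g w S \<longleftrightarrow>
     (\<forall>p\<in>S. (g has_derivative (\<lambda>h. fst (w p) * fst h + snd (w p) * snd h)) (at p))"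

definition vanishes_at_infinity :: "(real \<times> real \<Rightarrow> real) \<Rightarrow> (real \<times> real) set \<Rightarrow> bool" where
  "vanishes_at_infinity g S \<longleftrightarrow>
     (\<forall>e>0. \<exists>R. \<forall>p\<in>S. norm p \<ge> R \<longrightarrow> \<bar>g p\<bar> < e)"

end

theory Submission
  imports Defs
begin

text \<open>With \<open>W = Z'\<^sub>y + U'\<^sub>0\<close> and \<open>\<star>\<star> = -1\<close> one has \<open>\<rho>\<star>T\<^sub>2 = 4 S\<^sub>2 dW\<close>, so
  \<open>d(\<rho>\<star>T\<^sub>2) = 4 dS\<^sub>2 \<and> dW\<close>: the term \<open>S\<^sub>2 ddW\<close> vanishes by the symmetry of the second
  derivatives of \<open>W\<close>, which holds because \<open>dW = (1 + cos \<Upsilon>) dU'\<^sub>0 + sin \<Upsilon> \<star>dU'\<^sub>0\<close> is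
  differentiable off the axis (\<open>U'\<^sub>0\<close> is \<open>C\<^sup>2\<close>). Both \<open>dS\<^sub>2\<close> and \<open>dW\<close> are explicit combinations
  of a one-form and its Hodge dual, and since \<open>cos\<^sup>2 \<Upsilon> + sin\<^sup>2 \<Upsilon> = 1\<close> their wedge product is
  \<open>-2 sin \<Upsilon> e\<^bsup>-2U\<^sub>0-2Z\<^sub>y\<^esup> (d\<Omega>'\<^sub>0, dU'\<^sub>0)\<close>. The divergence form follows from
  \<open>\<nabla>\<^sub>aT\<^sup>a = -\<rho>\<^sup>-\<^sup>1 \<star>d(\<rho>\<star>T)\<close>.\<close>

section \<open>Partial derivatives and forms on the half-plane\<close>

lemma has_diff_on_iff_GDERIV:
  "has_diff_on g w S \<longleftrightarrow> (\<forall>p\<in>S. GDERIV g p :> w p)"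
  by (simp add: has_diff_on_def gderiv_def inner_prod_def mult.commute)

lemma pd_rho_eq:
  assumes "(F has_derivative F') (at p)"
  shows "pd_rho F p = F' (1, 0)"
proof -
  have "((\<lambda>r. (r, snd p)) has_derivative (\<lambda>u. (u, 0))) (at (fst p))"
    by (auto intro!: derivative_eq_intros)
  from has_derivative_compose[OF this, of F F'] assms
  have "((\<lambda>r. F (r, snd p)) has_derivative (\<lambda>u. F' (u, 0))) (at (fst p))"
    by simp
  moreover have "(\<lambda>u. F' (u, 0)) = (\<lambda>u. F' (1, 0) * u)"
  proof
    fix u
    show "F' (u, 0) = F' (1, 0) * u"
      using linear_scale[OF has_derivative_linear[OF assms], of u "(1, 0)"] by simp
  qed
  ultimately show ?thesis
    unfolding pd_rho_def by (intro DERIV_imp_deriv) (simp add: has_field_derivative_def)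
qed

lemma pd_z_eq:
  assumes "(F has_derivative F') (at p)"
  shows "pd_z F p = F' (0, 1)"
proof -
  have "((\<lambda>s. (fst p, s)) has_derivative (\<lambda>u. (0, u))) (at (snd p))"
    by (auto intro!: derivative_eq_intros)
  from has_derivative_compose[OF this, of F F'] assms
  have "((\<lambda>s. F (fst p, s)) has_derivative (\<lambda>u. F' (0, u))) (at (snd p))"
    by simp
  moreover have "(\<lambda>u. F' (0, u)) = (\<lambda>u. F' (0, 1) * u)"
  proof
    fix u
    show "F' (0, u) = F' (0, 1) * u"
      using linear_scale[OF has_derivative_linear[OF assms], of u "(0, 1)"] by simp
  qed
  ultimately show ?thesis
    unfolding pd_z_def by (intro DERIV_imp_deriv) (simp add: has_field_derivative_def)
qed

lemma d0_eq:
  assumes "GDERIV f p :> D"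
  shows "d0 f p = D"
  using pd_rho_eq[OF assms[unfolded gderiv_def]] pd_z_eq[OF assms[unfolded gderiv_def]]
  by (simp add: d0_def inner_prod_def)

lemma d1_eq:
  assumes "(w has_derivative L) (at p)"
  shows "d1 w p = snd (L (1, 0)) - fst (L (0, 1))"
  using pd_rho_eq[OF has_derivative_snd[OF assms]] pd_z_eq[OF has_derivative_fst[OF assms]]
  by (simp add: d1_def)

lemma bounded_linear_hodge: "bounded_linear hodge"
  unfolding hodge_def
  by (intro bounded_linear_Pair bounded_linear_minus bounded_linear_fst bounded_linear_snd)

lemma differentiable_hodge:
  assumes "w differentiable (at p)"
  shows "(\<lambda>q. hodge (w q)) differentiable (at p)"
  using differentiable_compose[OF bounded_linear_imp_differentiable[OF bounded_linear_hodge] assms]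
  by (simp add: o_def)

lemma wedge_scaleR_left: "wedge (a *\<^sub>R v) w = a * wedge v w"
  by (simp add: wedge_def algebra_simps)

lemma wedge_hodge_right: "wedge w (hodge h) = - (w \<bullet> h)"
  by (simp add: wedge_def hodge_def inner_prod_def)

lemma wedge_twisted_forms:
  assumes "c\<^sup>2 + s\<^sup>2 = 1"
  shows "wedge ((1 - c) *\<^sub>R w - s *\<^sub>R hodge w) ((1 + c) *\<^sub>R h + s *\<^sub>R hodge h) = - 2 * s * (w \<bullet> h)"
proof -
  have "wedge ((1 - c) *\<^sub>R w - s *\<^sub>R hodge w) ((1 + c) *\<^sub>R h + s *\<^sub>R hodge h)
      = (1 - c\<^sup>2 - s\<^sup>2) * wedge w h - 2 * s * (w \<bullet> h)"
    by (simp add: wedge_def hodge_def inner_prod_def power2_eq_square algebra_simps)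
  then show ?thesis using assms by (simp add: algebra_simps)
qed

lemma cyl_div_eq_d1_hodge:
  assumes "T differentiable (at p)" "fst p \<noteq> 0"
  shows "cyl_div T p = - d1 (\<lambda>q. fst q *\<^sub>R hodge (T q)) p / fst p"
proof -
  obtain L where L: "(T has_derivative L) (at p)"
    using assms(1) by (auto simp: differentiable_def)
  have D1: "((\<lambda>q. fst q *\<^sub>R hodge (T q)) has_derivative
      (\<lambda>k. fst p *\<^sub>R hodge (L k) + fst k *\<^sub>R hodge (T p))) (at p)"
    by (simp add: hodge_def) (auto intro!: derivative_eq_intros L)
  have D2: "((\<lambda>q. fst q * fst (T q)) has_derivative
      (\<lambda>k. fst p * fst (L k) + fst k * fst (T p))) (at p)"
    by (auto intro!: derivative_eq_intros L)
  have D3: "((\<lambda>q. snd (T q)) has_derivative (\<lambda>k. snd (L k))) (at p)"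
    by (auto intro!: derivative_eq_intros L)
  have d1T: "d1 (\<lambda>q. fst q *\<^sub>R hodge (T q)) p
      = - (fst (T p) + fst p * fst (L (1, 0)) + fst p * snd (L (0, 1)))"
    using d1_eq[OF D1] by (simp add: hodge_def)
  show ?thesis
    unfolding cyl_div_def d1T pd_rho_eq[OF D2] pd_z_eq[OF D3]
    using assms(2) by (simp add: field_simps)
qed

lemma cosU_sinU_squared:
  assumes "fst p \<noteq> 0"
  shows "(cosU y p)\<^sup>2 + (sinU y p)\<^sup>2 = 1"
proof -
  have "(cosU y p)\<^sup>2 + (sinU y p)\<^sup>2
      = ((snd p - y)\<^sup>2 + (fst p)\<^sup>2) / (sqrt ((fst p)\<^sup>2 + (snd p - y)\<^sup>2))\<^sup>2"
    by (simp add: cosU_def sinU_def power_divide add_divide_distrib)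
  also have "\<dots> = 1" using assms by (simp add: add_pos_nonneg)
  finally show ?thesis .
qed

lemma cosU_sinU_differentiable:
  assumes "fst p \<noteq> 0"
  shows "cosU y differentiable (at p)" "sinU y differentiable (at p)"
proof -
  have pos: "(fst p)\<^sup>2 + (snd p - y)\<^sup>2 > 0" using assms by (simp add: add_pos_nonneg)
  have "fst differentiable (at p)" "snd differentiable (at p)"
    by (simp_all add: bounded_linear_imp_differentiable bounded_linear_fst bounded_linear_snd)
  moreover have "((\<lambda>q. (fst q)\<^sup>2 + (snd q - y)\<^sup>2) has_derivative
      (\<lambda>k. 2 * fst p * fst k + 2 * (snd p - y) * snd k)) (at p)"
    by (auto intro!: derivative_eq_intros simp: algebra_simps)
  then have "(\<lambda>q. sqrt ((fst q)\<^sup>2 + (snd q - y)\<^sup>2)) differentiable (at p)"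
    using has_derivative_real_sqrt[where g = "\<lambda>q. (fst q)\<^sup>2 + (snd q - y)\<^sup>2", OF pos] by (blast intro: differentiableI)
  ultimately show "cosU y differentiable (at p)" "sinU y differentiable (at p)"
    using pos unfolding cosU_def[abs_def] sinU_def[abs_def] by (auto intro!: derivative_intros)
qed

section \<open>Symmetry of second derivatives\<close>

lemma second_difference_tendsto:
  fixes f :: "'a::real_inner \<Rightarrow> real"
  assumes "open N" "p \<in> N"
    and grad: "\<And>q. q \<in> N \<Longrightarrow> GDERIV f q :> B q"
    and B: "(B has_derivative L) (at p)"
  shows "((\<lambda>h. (f (p + h *\<^sub>R u + h *\<^sub>R v) - f (p + h *\<^sub>R u) - f (p + h *\<^sub>R v) + f p) / h\<^sup>2)
           \<longlongrightarrow> L v \<bullet> u) (at_right 0)"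
proof (rule tendstoI)
  fix e :: real assume "e > 0"
  define M where "M = norm u + norm v + 1"
  have "M > 0" by (simp add: M_def add_nonneg_pos)
  define e' where "e' = e / (4 * M\<^sup>2)"
  have "e' > 0" using \<open>e > 0\<close> \<open>M > 0\<close> by (simp add: e'_def)
  obtain d1 where "d1 > 0" and d1: "ball p d1 \<subseteq> N" using assms openE by blast
  obtain d2 where "d2 > 0"
    and d2: "\<And>y. norm (y - p) < d2 \<Longrightarrow> norm (B y - B p - L (y - p)) \<le> e' * norm (y - p)"
    using B \<open>e' > 0\<close> unfolding has_derivative_at_alt by blast
  define b where "b = min d1 d2 / M"
  have "b > 0" using \<open>d1 > 0\<close> \<open>d2 > 0\<close> \<open>M > 0\<close> by (simp add: b_def)
  have lin: "linear L" using B by (rule has_derivative_linear)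
  have bound: "\<forall>h. 0 < h \<and> h < b \<longrightarrow> \<bar>f (p + h *\<^sub>R u + h *\<^sub>R v) - f (p + h *\<^sub>R u) - f (p + h *\<^sub>R v) + f p
      - h\<^sup>2 * (L v \<bullet> u)\<bar> \<le> h\<^sup>2 * (e / 2)"
  proof (intro allI impI, elim conjE)
    fix h :: real assume "0 < h" "h < b"
    have norm_le: "norm (s *\<^sub>R u + t *\<^sub>R v) \<le> h * M" if "0 \<le> s" "s \<le> h" "0 \<le> t" "t \<le> h" for s t
    proof -
      have "s * norm u \<le> h * norm u" "t * norm v \<le> h * norm v"
        using that by (simp_all add: mult_right_mono)
      then have "norm (s *\<^sub>R u + t *\<^sub>R v) \<le> h * (norm u + norm v)"
        using norm_triangle_ineq[of "s *\<^sub>R u" "t *\<^sub>R v"] that by (simp add: distrib_left)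
      also have "\<dots> \<le> h * M" using \<open>0 < h\<close> by (simp add: M_def)
      finally show ?thesis .
    qed
    have "h * M < min d1 d2" using \<open>h < b\<close> \<open>M > 0\<close> by (simp add: b_def pos_less_divide_eq)
    then have near: "norm (s *\<^sub>R u + t *\<^sub>R v) < d1" "norm (s *\<^sub>R u + t *\<^sub>R v) < d2"
      if "0 \<le> s" "s \<le> h" "0 \<le> t" "t \<le> h" for s t
      using norm_le[OF that] by linarith+
    have inN: "p + (s *\<^sub>R u + t *\<^sub>R v) \<in> N" if "0 \<le> s" "s \<le> h" "0 \<le> t" "t \<le> h" for s t
    proof -
      have "p + w \<in> N" if "norm w < d1" for w
        using that d1 by (auto simp: dist_norm)
      then show ?thesis using near(1)[OF that] by simp
    qed
    have line: "((\<lambda>s. f (p + (s *\<^sub>R u + t *\<^sub>R v))) has_real_derivative u \<bullet> B (p + (s *\<^sub>R u + t *\<^sub>R v))) (at s)"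
      if "0 \<le> s" "s \<le> h" "0 \<le> t" "t \<le> h" for s t
    proof -
      have "((\<lambda>s. p + (s *\<^sub>R u + t *\<^sub>R v)) has_derivative (\<lambda>s. s *\<^sub>R u)) (at s)"
        by (auto intro!: derivative_eq_intros)
      from has_derivative_compose[OF this grad[OF inN[OF that], unfolded gderiv_def]]
      show ?thesis by (simp add: has_field_derivative_def inner_commute mult_commute_abs)
    qed
    define \<phi> where "\<phi> s = f (p + (s *\<^sub>R u + h *\<^sub>R v)) - f (p + (s *\<^sub>R u + 0 *\<^sub>R v))" for s
    have "(\<phi> has_real_derivative u \<bullet> B (p + (s *\<^sub>R u + h *\<^sub>R v)) - u \<bullet> B (p + (s *\<^sub>R u + 0 *\<^sub>R v))) (at s)"
      if "0 \<le> s" "s \<le> h" for s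
      unfolding \<phi>_def using that \<open>0 < h\<close> by (intro DERIV_diff line) auto
    from MVT2[OF \<open>0 < h\<close> this] obtain z where z: "0 < z" "z < h"
      and mvt: "\<phi> h - \<phi> 0 = h * (u \<bullet> B (p + (z *\<^sub>R u + h *\<^sub>R v)) - u \<bullet> B (p + (z *\<^sub>R u + 0 *\<^sub>R v)))"
      by auto
    define r where "r t = B (p + (z *\<^sub>R u + t *\<^sub>R v)) - B p - L (z *\<^sub>R u + t *\<^sub>R v)" for t
    have r_le: "norm (r t) \<le> e' * (h * M)" if "0 \<le> t" "t \<le> h" for t
    proof -
      have "norm (r t) \<le> e' * norm (z *\<^sub>R u + t *\<^sub>R v)"
        using d2[of "p + (z *\<^sub>R u + t *\<^sub>R v)"] near(2)[of z t] z that by (simp add: r_def)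
      also have "\<dots> \<le> e' * (h * M)"
        using norm_le[of z t] z that \<open>e' > 0\<close> by (intro mult_left_mono) auto
      finally show ?thesis .
    qed
    have "\<phi> h - \<phi> 0 - h\<^sup>2 * (L v \<bullet> u) = h * (u \<bullet> (r h - r 0))"
      unfolding mvt r_def
      by (simp add: linear_add[OF lin] linear_scale[OF lin] inner_commute power2_eq_square algebra_simps)
    also have "\<bar>\<dots>\<bar> \<le> h * (M * (2 * (e' * (h * M))))"
    proof -
      have "\<bar>u \<bullet> (r h - r 0)\<bar> \<le> norm u * (norm (r h) + norm (r 0))"
        using Cauchy_Schwarz_ineq2[of u "r h - r 0"] norm_triangle_ineq4[of "r h" "r 0"]
        by (meson mult_left_mono norm_ge_zero order_trans)
      also have "\<dots> \<le> M * (2 * (e' * (h * M)))"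
        using r_le[of h] r_le[of 0] \<open>0 < h\<close> by (intro mult_mono) (auto simp: M_def)
      finally show ?thesis using \<open>0 < h\<close> by (simp add: abs_mult mult_left_mono)
    qed
    also have "\<dots> = h\<^sup>2 * (e / 2)"
      using \<open>M > 0\<close> by (simp add: e'_def power2_eq_square field_simps)
    also have "\<phi> h - \<phi> 0 = f (p + h *\<^sub>R u + h *\<^sub>R v) - f (p + h *\<^sub>R u) - f (p + h *\<^sub>R v) + f p"
      by (simp add: \<phi>_def add.assoc)
    finally show "\<bar>f (p + h *\<^sub>R u + h *\<^sub>R v) - f (p + h *\<^sub>R u) - f (p + h *\<^sub>R v) + f p
      - h\<^sup>2 * (L v \<bullet> u)\<bar> \<le> h\<^sup>2 * (e / 2)" .
  qed
  show "\<forall>\<^sub>F h in at_right 0. dist ((f (p + h *\<^sub>R u + h *\<^sub>R v) - f (p + h *\<^sub>R u)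
      - f (p + h *\<^sub>R v) + f p) / h\<^sup>2) (L v \<bullet> u) < e"
    unfolding eventually_at_right_field
  proof (intro exI[of _ b] conjI allI impI)
    fix h :: real assume "0 < h" "h < b"
    define \<Delta> where "\<Delta> = f (p + h *\<^sub>R u + h *\<^sub>R v) - f (p + h *\<^sub>R u) - f (p + h *\<^sub>R v) + f p"
    have "h\<^sup>2 > 0" using \<open>0 < h\<close> by simp
    have "\<Delta> / h\<^sup>2 - L v \<bullet> u = (\<Delta> - h\<^sup>2 * (L v \<bullet> u)) / h\<^sup>2"
      using \<open>h\<^sup>2 > 0\<close> by (simp add: field_simps)
    then have "dist (\<Delta> / h\<^sup>2) (L v \<bullet> u) = \<bar>\<Delta> - h\<^sup>2 * (L v \<bullet> u)\<bar> / h\<^sup>2"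
      by (simp add: dist_real_def)
    also have "\<dots> \<le> e / 2"
      using bound \<open>0 < h\<close> \<open>h < b\<close> \<open>h\<^sup>2 > 0\<close> by (simp add: \<Delta>_def pos_divide_le_eq mult.commute)
    finally show "dist (\<Delta> / h\<^sup>2) (L v \<bullet> u) < e" using \<open>e > 0\<close> by linarith
  qed (use \<open>b > 0\<close> in simp)
qed

lemma GDERIV_derivative_symmetric:
  fixes f :: "'a::real_inner \<Rightarrow> real"
  assumes "open N" "p \<in> N"
    and "\<And>q. q \<in> N \<Longrightarrow> GDERIV f q :> B q"
    and "(B has_derivative L) (at p)"
  shows "L v \<bullet> u = L u \<bullet> v"
proof -
  have "((\<lambda>h. (f (p + h *\<^sub>R u + h *\<^sub>R v) - f (p + h *\<^sub>R u) - f (p + h *\<^sub>R v) + f p) / h\<^sup>2)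
           \<longlongrightarrow> L u \<bullet> v) (at_right 0)"
    using second_difference_tendsto[OF assms, of v u] by (simp add: algebra_simps)
  with second_difference_tendsto[OF assms, of u v] show ?thesis
    by (rule tendsto_unique[OF trivial_limit_at_right_real])
qed

lemma d1_scaleR_gradient:
  assumes "open N" "p \<in> N"
    and grad: "\<And>q. q \<in> N \<Longrightarrow> GDERIV W q :> B q"
    and B: "(B has_derivative L) (at p)"
    and S: "GDERIV S p :> A"
    and w: "\<And>q. q \<in> N \<Longrightarrow> w q = S q *\<^sub>R B q"
  shows "d1 w p = wedge A (B p)"
proof -
  have "((\<lambda>q. S q *\<^sub>R B q) has_derivative (\<lambda>k. S p *\<^sub>R L k + (k \<bullet> A) *\<^sub>R B p)) (at p)"
    using S unfolding gderiv_def by (auto intro!: derivative_eq_intros B)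
  then have "(w has_derivative (\<lambda>k. S p *\<^sub>R L k + (k \<bullet> A) *\<^sub>R B p)) (at p)"
    by (rule has_derivative_transform_within_open[OF _ assms(1,2)]) (simp add: w)
  moreover have "L (0, 1) \<bullet> (1, 0) = L (1, 0) \<bullet> (0, 1)"
    by (rule GDERIV_derivative_symmetric[OF assms(1-4)])
  ultimately show ?thesis
    by (simp add: d1_eq inner_prod_def wedge_def algebra_simps)
qed

lemma scaled_hodge_gradient_d1_cyl_div:
  fixes c :: real
  assumes "open N" "p \<in> N" "\<And>q. q \<in> N \<Longrightarrow> fst q \<noteq> 0"
    and grad: "\<And>q. q \<in> N \<Longrightarrow> GDERIV W q :> B q"
    and B: "(B has_derivative L) (at p)"
    and S: "GDERIV S p :> A"
  defines "T \<equiv> \<lambda>q. (c / fst q * S q) *\<^sub>R hodge (d0 W q)"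
  shows "d1 (\<lambda>q. fst q *\<^sub>R hodge (T q)) p = - c * wedge A (B p)"
    and "cyl_div T p = c * wedge A (B p) / fst p"
proof -
  have T: "T q = (c / fst q * S q) *\<^sub>R hodge (B q)" if "q \<in> N" for q
    using d0_eq[OF grad[OF that]] by (simp add: T_def)
  have cS: "GDERIV (\<lambda>q. - c * S q) p :> (- c) *\<^sub>R A"
    using S unfolding gderiv_def by (auto intro!: derivative_eq_intros)
  have "fst q *\<^sub>R hodge (T q) = (- c * S q) *\<^sub>R B q" if "q \<in> N" for q
    using assms(3)[OF that] by (simp add: T[OF that] hodge_def prod_eq_iff)
  from d1_scaleR_gradient[OF assms(1,2) grad B cS this]
  have "d1 (\<lambda>q. fst q *\<^sub>R hodge (T q)) p = wedge ((- c) *\<^sub>R A) (B p)" .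
  then show d1T: "d1 (\<lambda>q. fst q *\<^sub>R hodge (T q)) p = - c * wedge A (B p)"
    by (simp add: wedge_def algebra_simps)
  have "S differentiable (at p)" "B differentiable (at p)"
    using S B unfolding gderiv_def by (auto intro: differentiableI)
  moreover have "fst differentiable (at p)"
    by (rule bounded_linear_imp_differentiable[OF bounded_linear_fst])
  ultimately have "(\<lambda>q. (c / fst q * S q) *\<^sub>R hodge (B q)) differentiable (at p)"
    using assms(2,3) by (intro derivative_intros differentiable_hodge) auto
  then obtain LT where "((\<lambda>q. (c / fst q * S q) *\<^sub>R hodge (B q)) has_derivative LT) (at p)"
    by (auto simp: differentiable_def)
  then have "(T has_derivative LT) (at p)"
    by (rule has_derivative_transform_within_open[OF _ assms(1,2)]) (simp add: T)
  then show "cyl_div T p = c * wedge A (B p) / fst p"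
    using assms(2,3) by (simp add: cyl_div_eq_d1_hodge differentiableI d1T)
qed

section \<open>The meridian half-plane in Euclidean 3-space\<close>

definition meridian_embedding :: "real \<times> real \<Rightarrow> real^3" where
  "meridian_embedding q = cyl_pt (fst q) (snd q) 0"

lemma meridian_embedding_axis:
  "meridian_embedding q = fst q *\<^sub>R axis 1 1 + snd q *\<^sub>R axis 3 1"
  unfolding vec_eq_iff forall_3 by (simp add: meridian_embedding_def cyl_pt_def axis_def)

lemma bounded_linear_meridian_embedding: "bounded_linear meridian_embedding"
  unfolding meridian_embedding_axis[abs_def]
  by (intro bounded_linear_add bounded_linear_compose[OF bounded_linear_scaleR_left]
      bounded_linear_fst bounded_linear_snd)

lemma lift_meridian_embedding:
  assumes "0 \<le> fst q"
  shows "lift U (meridian_embedding q) = U q"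
  using assms by (simp add: lift_def meridian_embedding_def cyl_pt_def)

lemma proj_K_off_axis:
  "{q \<in> proj_K D. 0 < fst q} = fst -` {0<..} \<inter> meridian_embedding -` D"
  by (auto simp: proj_K_def meridian_embedding_def)

lemma open_proj_K_off_axis:
  assumes "open D"
  shows "open {q \<in> proj_K D. 0 < fst q}"
  unfolding proj_K_off_axis
  using assms bounded_linear_meridian_embedding
  by (intro open_Int open_vimage_fst continuous_open_vimage linear_continuous_at) auto

lemma C2_on_lift_gradient:
  assumes "C2_on D (lift U)"
  obtains G where "\<And>q. q \<in> {q \<in> proj_K D. 0 < fst q} \<Longrightarrow> GDERIV U q :> G q"
    and "\<And>q. q \<in> {q \<in> proj_K D. 0 < fst q} \<Longrightarrow> G differentiable (at q)"
proof -
  obtain g where g: "\<And>x. x \<in> D \<Longrightarrow> (lift U has_derivative (\<lambda>h. g x \<bullet> h)) (at x)"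
    and g_C1: "\<And>i. i \<in> Basis \<Longrightarrow> C1_on D (\<lambda>x. g x \<bullet> i)"
    using assms unfolding C2_on_def by blast
  let ?m = meridian_embedding
  have m: "(?m has_derivative ?m) (at q)" for q
    by (rule bounded_linear_imp_has_derivative[OF bounded_linear_meridian_embedding])
  define G where "G q = (g (?m q) $ 1, g (?m q) $ 3)" for q
  show ?thesis
  proof
    fix q assume "q \<in> {q \<in> proj_K D. 0 < fst q}"
    then have q: "q \<in> proj_K D" "0 < fst q" by simp_all
    then have "?m q \<in> D" by (simp add: proj_K_def meridian_embedding_def)
    have "(\<lambda>k. g (?m q) \<bullet> ?m k) = (\<lambda>k. k \<bullet> G q)"
      by (simp add: meridian_embedding_axis inner_add_right inner_axis inner_prod_def G_def)
    with has_derivative_compose[OF m g[OF \<open>?m q \<in> D\<close>]]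
    have "((\<lambda>q. lift U (?m q)) has_derivative (\<lambda>k. k \<bullet> G q)) (at q)"
      by simp
    then show "GDERIV U q :> G q"
      unfolding gderiv_def
      by (rule has_derivative_transform_within_open[where s = "fst -` {0<..}"])
        (use q in \<open>auto simp: lift_meridian_embedding open_vimage_fst\<close>)
  next
    fix q assume "q \<in> {q \<in> proj_K D. 0 < fst q}"
    then have q: "q \<in> proj_K D" "0 < fst q" by simp_all
    then have "?m q \<in> D" by (simp add: proj_K_def meridian_embedding_def)
    have "(\<lambda>q. g (?m q) $ i) differentiable (at q)" if "i = 1 \<or> i = 3" for i
    proof -
      have "C1_on D (\<lambda>x. g x \<bullet> axis i 1)"
        using that by (intro g_C1) auto
      then obtain gi where "((\<lambda>x. g x $ i) has_derivative (\<lambda>h. gi (?m q) \<bullet> h)) (at (?m q))"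
        using \<open>?m q \<in> D\<close> unfolding C1_on_def by (auto simp: inner_axis)
      from has_derivative_compose[OF m this] show ?thesis
        by (rule differentiableI)
    qed
    then show "G differentiable (at q)"
      unfolding G_def by (auto intro: differentiable_Pair)
  qed
qed

lemma compact_C1_sphere_surface:
  assumes "C1_sphere_surface S"
  shows "compact S"
proof -
  obtain h :: "real^3 \<Rightarrow> real^3" and V D where "sphere 0 1 \<subseteq> V"
    and "\<forall>x\<in>V. (h has_derivative D x) (at x)" and "h ` sphere 0 1 = S"
    using assms unfolding C1_sphere_surface_def by blast
  then show ?thesis
    by (metis compact_continuous_image compact_sphere continuous_at_imp_continuous_on
        has_derivative_continuous subsetD)
qed

lemma open_exterior_off_axis:
  assumes "C1_sphere_surface S"
  shows "open {q \<in> proj_K (outside S). 0 < fst q}"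
  using compact_C1_sphere_surface[OF assms]
  by (intro open_proj_K_off_axis open_outside compact_imp_closed)

section \<open>The divergence identity off the axis\<close>

lemma GDERIV_twisted_potential:
  assumes "q \<in> N" "GDERIV U q :> G"
    and "has_diff_on Zp (\<lambda>p. cosU y p *\<^sub>R d0 U p + sinU y p *\<^sub>R hodge (d0 U p)) N"
  shows "GDERIV (\<lambda>r. Zp r + U r) q :> (1 + cosU y q) *\<^sub>R G + sinU y q *\<^sub>R hodge G"
proof -
  have "GDERIV Zp q :> cosU y q *\<^sub>R d0 U q + sinU y q *\<^sub>R hodge (d0 U q)"
    using assms(1,3) by (simp add: has_diff_on_iff_GDERIV)
  then have "GDERIV Zp q :> cosU y q *\<^sub>R G + sinU y q *\<^sub>R hodge G"
    by (simp add: d0_eq[OF assms(2)])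
  from GDERIV_add[OF this assms(2)] show ?thesis by (simp add: algebra_simps)
qed

lemma T2_d1_cyl_div_identities:
  assumes "open N" "\<And>q. q \<in> N \<Longrightarrow> 0 < fst q" "p \<in> N"
    and dU0': "\<And>q. q \<in> N \<Longrightarrow> GDERIV U0' q :> G q"
    and G: "\<And>q. q \<in> N \<Longrightarrow> G differentiable (at q)"
    and Zp: "has_diff_on Zp (\<lambda>p. cosU y p *\<^sub>R d0 U0' p + sinU y p *\<^sub>R hodge (d0 U0' p)) N"
    and S2: "has_diff_on S2 (\<lambda>p. exp (- 2 * U0 p - 2 * Z p) *\<^sub>R
            ((1 - cosU y p) *\<^sub>R d0 Om0' p - sinU y p *\<^sub>R hodge (d0 Om0' p))) N"
  shows "let T2 = (\<lambda>q. (- 4 / fst q * S2 q) *\<^sub>R hodge (d0 (\<lambda>r. Zp r + U0' r) q)) in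
        d1 (\<lambda>q. fst q *\<^sub>R hodge (T2 q)) p
          = 8 * sinU y p * exp (- 2 * U0 p - 2 * Z p) * wedge (d0 Om0' p) (hodge (d0 U0' p))
      \<and> cyl_div T2 p
          = 8 / sqrt ((fst p)\<^sup>2 + (snd p - y)\<^sup>2) * exp (- 2 * U0 p - 2 * Z p)
              * (d0 Om0' p \<bullet> d0 U0' p)"
proof -
  define B where "B q = (1 + cosU y q) *\<^sub>R G q + sinU y q *\<^sub>R hodge (G q)" for q
  have grad: "GDERIV (\<lambda>r. Zp r + U0' r) q :> B q" if "q \<in> N" for q
    unfolding B_def using GDERIV_twisted_potential[OF that dU0'[OF that] Zp] .
  have off_axis: "\<And>q. q \<in> N \<Longrightarrow> fst q \<noteq> 0" using assms(2) by fastforce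
  then have "fst p \<noteq> 0" using \<open>p \<in> N\<close> .
  have "B differentiable (at p)"
    using G[OF \<open>p \<in> N\<close>] cosU_sinU_differentiable[OF \<open>fst p \<noteq> 0\<close>] unfolding B_def[abs_def]
    by (intro derivative_intros differentiable_hodge) auto
  then obtain L where L: "(B has_derivative L) (at p)" by (auto simp: differentiable_def)
  define E where "E = exp (- 2 * U0 p - 2 * Z p)"
  define A where "A = (1 - cosU y p) *\<^sub>R d0 Om0' p - sinU y p *\<^sub>R hodge (d0 Om0' p)"
  have "GDERIV S2 p :> E *\<^sub>R A"
    using S2 \<open>p \<in> N\<close> by (simp add: has_diff_on_iff_GDERIV E_def A_def)
  note T2 = scaled_hodge_gradient_d1_cyl_div[OF \<open>open N\<close> \<open>p \<in> N\<close> off_axis grad L this, where c = "- 4"]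
  have "wedge (E *\<^sub>R A) (B p) = - 2 * sinU y p * E * (d0 Om0' p \<bullet> d0 U0' p)"
    using wedge_twisted_forms[OF cosU_sinU_squared[OF \<open>fst p \<noteq> 0\<close>]]
    by (simp add: wedge_scaleR_left A_def B_def d0_eq[OF dU0'[OF \<open>p \<in> N\<close>]])
  moreover have "sqrt ((fst p)\<^sup>2 + (snd p - y)\<^sup>2) \<noteq> 0"
    using \<open>fst p \<noteq> 0\<close> by simp
  ultimately show ?thesis
    using T2 \<open>fst p \<noteq> 0\<close> by (simp add: wedge_hodge_right E_def sinU_def)
qed

theorem mainTheorem7:
  fixes rho0 z0 :: "real \<Rightarrow> real" and muS muN y :: real
    and U0 U0' Om0' Z Zp S2 :: "real \<times> real \<Rightarrow> real"
  defines "Sigma0 \<equiv> rev_surface rho0 z0 muS muN"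
  defines "D0 \<equiv> outside Sigma0"
  defines "KE \<equiv> proj_K D0"
  defines "KEo \<equiv> {p \<in> KE. fst p > 0}"
  assumes "muS < muN"
    and "C1_interval rho0 {muS..muN}" and "C1_interval z0 {muS..muN}"
    and "rho0 muS = 0" and "rho0 muN = 0"
    and "\<forall>mu \<in> {muS<..<muN}. rho0 mu > 0"
    and "z0 muS < z0 muN"
    and "C1_sphere_surface Sigma0"
    and "regular D0 Sigma0 (lift U0)" and "\<forall>x\<in>D0. lap3 (lift U0) x = 0"
    and "regular D0 Sigma0 (lift U0')" and "\<forall>x\<in>D0. lap3 (lift U0') x = 0"
    and "regular D0 Sigma0 (lift Om0')"
    and "\<forall>x\<in>D0. lap3 (lift Om0') x - 4 * (grad3 (lift Om0') x \<bullet> grad3 (lift U0) x) = 0"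
    and "z0 muS < y" and "y < z0 muN"
    and "has_diff_on Z (\<lambda>p. cosU y p *\<^sub>R d0 U0 p + sinU y p *\<^sub>R hodge (d0 U0 p)) KEo"
    and "vanishes_at_infinity Z KEo"
    and "has_diff_on S2 (\<lambda>p. exp (- 2 * U0 p - 2 * Z p) *\<^sub>R
            ((1 - cosU y p) *\<^sub>R d0 Om0' p - sinU y p *\<^sub>R hodge (d0 Om0' p))) KEo"
    and "vanishes_at_infinity S2 KEo"
    and "has_diff_on Zp (\<lambda>p. cosU y p *\<^sub>R d0 U0' p + sinU y p *\<^sub>R hodge (d0 U0' p)) KEo"
    and "vanishes_at_infinity Zp KEo"
  shows "\<forall>p\<in>KEo.
     (let T2 = (\<lambda>q. (- 4 / fst q * S2 q) *\<^sub>R hodge (d0 (\<lambda>r. Zp r + U0' r) q)) in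
        d1 (\<lambda>q. fst q *\<^sub>R hodge (T2 q)) p
          = 8 * sinU y p * exp (- 2 * U0 p - 2 * Z p) * wedge (d0 Om0' p) (hodge (d0 U0' p))
      \<and> cyl_div T2 p
          = 8 / sqrt ((fst p)\<^sup>2 + (snd p - y)\<^sup>2) * exp (- 2 * U0 p - 2 * Z p)
              * (d0 Om0' p \<bullet> d0 U0' p))"
proof
  have KEo: "KEo = {q \<in> proj_K D0. 0 < fst q}" by (simp add: KEo_def KE_def)
  have "open KEo"
    unfolding KEo D0_def by (rule open_exterior_off_axis[OF assms(12)])
  have off_axis: "\<And>q. q \<in> KEo \<Longrightarrow> 0 < fst q" by (simp add: KEo)
  have "C2_on D0 (lift U0')" using assms(15) by (simp add: regular_def)
  then obtain G where dU0': "\<And>q. q \<in> KEo \<Longrightarrow> GDERIV U0' q :> G q"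
    and G: "\<And>q. q \<in> KEo \<Longrightarrow> G differentiable (at q)"
    using C2_on_lift_gradient[of D0 U0', folded KEo] by metis
  show "let T2 = (\<lambda>q. (- 4 / fst q * S2 q) *\<^sub>R hodge (d0 (\<lambda>r. Zp r + U0' r) q)) in
        d1 (\<lambda>q. fst q *\<^sub>R hodge (T2 q)) p
          = 8 * sinU y p * exp (- 2 * U0 p - 2 * Z p) * wedge (d0 Om0' p) (hodge (d0 U0' p))
      \<and> cyl_div T2 p
          = 8 / sqrt ((fst p)\<^sup>2 + (snd p - y)\<^sup>2) * exp (- 2 * U0 p - 2 * Z p)
              * (d0 Om0' p \<bullet> d0 U0' p)" if "p \<in> KEo" for p
    by (rule T2_d1_cyl_div_identities[OF \<open>open KEo\<close> off_axis that dU0' G assms(25,23)])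
qed

end
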